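(* Let $x$ be a grid function with $x_s\neq0$ at every node that satisfies the scheme (S) with $\check B=\frac{2(\cos\tau-1)}{\tau^2}\,x$ (discretization for the parabolic bottom $b(x)=-x^2/2$). Then at every node $$\Big(x_t\cos t-x\,\frac{\cos\hat t-\cos t}{\tau}\Big)_{\check t}+\Big(\cos t\,\big((\hat x_s\check x_s)^{-1}-\alpha^2x_s\big)\Big)_{\bar s}=0,$$ where $t$ is the time coordinate of the node and $\hat t=t+\tau$.
   Context: Fix mesh steps $\tau>0$, $h>0$ and a constant $\alpha\in\mathbb R$. A grid function is a real-valued function $f=f(t,s)$ on the uniform orthogonal mesh $\{(n\tau,kh): n,k\in\mathbb Z\}$; at the node $(n\tau,kh)$ the symbol $t$ denotes the number $n\tau$. Shifts: $\hat f=f(t+\tau,s)$, $\check f=f(t-\tau,s)$, $f_+=f(t,s+h)$, $f_-=f(t,s-h)$; a shift applied to a composite expression shifts the whole expression, including explicit occurrences of $t$ (e.g. $\hat x_s$ is $x_s$ evaluated at $(t+\tau,s)$). Differences: $f_t=(\hat f-f)/\tau$, $f_{\check t}=(f-\check f)/\tau$, $f_s=(f_+-f)/h$, $f_{\bar s}=(f-f_-)/h$; iterated differences compose, e.g. $x_{t\check t}=(x_t)_{\check t}=(\hat x-2x+\check x)/\tau^2$ and $x_{s\bar s}=(x_s)_{\bar s}=(x_+-2x+x_-)/h^2$. Given a grid function $x$ with $x_s\neq0$ everywhere and a grid function $\check B$ (an approximation of the bottom-slope term), the scheme (S) is the requirement that at every node $$x_{t\check t}-\alpha^2x_{s\bar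 s}+\Big(\frac{1}{\hat x_s\check x_s}\Big)_{\bar s}-\check B=0 .$$ *)

theory Defs
  imports Complex_Main
begin

text \<open>Grid functions on the mesh {(n tau, k h)} are represented as functions
  of the integer indices (n, k).\<close>

type_synonym grid = "int \<Rightarrow> int \<Rightarrow> real"

definition shift_t :: "grid \<Rightarrow> grid" where
  "shift_t f = (\<lambda>n k. f (n + 1) k)"

definition shift_tb :: "grid \<Rightarrow> grid" where
  "shift_tb f = (\<lambda>n k. f (n - 1) k)"

definition diff_t :: "real \<Rightarrow> grid \<Rightarrow> grid" where
  "diff_t tau f = (\<lambda>n k. (f (n + 1) k - f n k) / tau)"

definition diff_tb :: "real \<Rightarrow> grid \<Rightarrow> grid" where
  "diff_tb tau f = (\<lambda>n k. (f n k - f (n - 1) k) / tau)"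

definition diff_s :: "real \<Rightarrow> grid \<Rightarrow> grid" where
  "diff_s h f = (\<lambda>n k. (f n (k + 1) - f n k) / h)"

definition diff_sb :: "real \<Rightarrow> grid \<Rightarrow> grid" where
  "diff_sb h f = (\<lambda>n k. (f n k - f n (k - 1)) / h)"

definition scheme_S :: "real \<Rightarrow> real \<Rightarrow> real \<Rightarrow> grid \<Rightarrow> grid \<Rightarrow> bool" where
  "scheme_S tau h alpha x Bc \<longleftrightarrow>
     (\<forall>n k. diff_tb tau (diff_t tau x) n k - alpha\<^sup>2 * diff_sb h (diff_s h x) n k
        + diff_sb h (\<lambda>n' k'. 1 / (shift_t (diff_s h x) n' k' * shift_tb (diff_s h x) n' k')) n k
        - Bc n k = 0)"

end

theory Submission
  imports Defs
begin

text \<open>Multiplying the scheme by \<open>cos t\<close> yields the conservation law. In time, the discrete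
  Lagrange identity turns \<open>cos t \<cdot> x\<^sub>t\<^sub>\<check>t\<close> into the \<open>\<check>t\<close>-difference of a discrete Wronskian up to
  \<open>x \<cdot> (cos t)\<^sub>t\<^sub>\<check>t\<close>, and \<open>(cos t)\<^sub>t\<^sub>\<check>t = 2 (cos \<tau> - 1) / \<tau>\<^sup>2 \<cdot> cos t\<close> is exactly the bottom term;
  in space, \<open>cos t\<close> commutes with \<open>\<bar>s\<close>-differences.\<close>

lemma diff_tb_wronskian:
  "diff_tb tau (\<lambda>n k. diff_t tau x n k * c n k - x n k * diff_t tau c n k) n k
   = c n k * diff_tb tau (diff_t tau x) n k - x n k * diff_tb tau (diff_t tau c) n k"
  unfolding diff_tb_def diff_t_def
  by (cases "tau = 0") (simp_all add: field_simps)

lemma diff_sb_mult_time_factor: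
  "diff_sb h (\<lambda>n k. c n * f n k) n k = c n * diff_sb h f n k"
  unfolding diff_sb_def by (simp add: algebra_simps)

lemma diff_sb_diff_scaled:
  "diff_sb h (\<lambda>n k. f n k - a * g n k) n k = diff_sb h f n k - a * diff_sb h g n k"
  unfolding diff_sb_def by (cases "h = 0") (simp_all add: field_simps)

lemma cos_grid_second_diff:
  "diff_tb tau (diff_t tau (\<lambda>n k. cos (real_of_int n * tau))) n k
   = 2 * (cos tau - 1) / tau\<^sup>2 * cos (real_of_int n * tau)"
proof -
  have "cos (real_of_int (n + 1) * tau) + cos (real_of_int (n - 1) * tau)
        = 2 * cos tau * cos (real_of_int n * tau)"
    by (simp add: distrib_right left_diff_distrib cos_add cos_diff)
  moreover have "diff_tb tau (diff_t tau (\<lambda>n k. cos (real_of_int n * tau))) n k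
      = (cos (real_of_int (n + 1) * tau) + cos (real_of_int (n - 1) * tau)
         - 2 * cos (real_of_int n * tau)) / tau\<^sup>2"
    unfolding diff_tb_def diff_t_def
    by (cases "tau = 0") (simp_all add: field_simps power2_eq_square)
  ultimately show ?thesis
    by (simp add: algebra_simps diff_divide_distrib)
qed

lemma scheme_S_cos_conservation_law:
  fixes tau h alpha :: real and x :: grid
  defines "c \<equiv> \<lambda>n k. cos (real_of_int n * tau)"
    and "q \<equiv> \<lambda>n k. 1 / (shift_t (diff_s h x) n k * shift_tb (diff_s h x) n k)"
  assumes "scheme_S tau h alpha x (\<lambda>n k. 2 * (cos tau - 1) / tau\<^sup>2 * x n k)"
  shows "diff_tb tau (\<lambda>n' k'. diff_t tau x n' k' * c n' k' - x n' k' * diff_t tau c n' k') n k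
      + diff_sb h (\<lambda>n' k'. c n' k' * (q n' k' - alpha\<^sup>2 * diff_s h x n' k')) n k = 0"
proof -
  have time: "diff_tb tau (\<lambda>n' k'. diff_t tau x n' k' * c n' k' - x n' k' * diff_t tau c n' k') n k
      = c n k * (diff_tb tau (diff_t tau x) n k - 2 * (cos tau - 1) / tau\<^sup>2 * x n k)"
    unfolding diff_tb_wronskian c_def cos_grid_second_diff by (simp add: algebra_simps)
  have space: "diff_sb h (\<lambda>n' k'. c n' k' * (q n' k' - alpha\<^sup>2 * diff_s h x n' k')) n k
      = c n k * (diff_sb h q n k - alpha\<^sup>2 * diff_sb h (diff_s h x) n k)"
    using diff_sb_mult_time_factor[of h "\<lambda>n. cos (real_of_int n * tau)"]
      diff_sb_diff_scaled[of h q "alpha\<^sup>2"]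
    by (simp add: c_def)
  have "diff_tb tau (\<lambda>n' k'. diff_t tau x n' k' * c n' k' - x n' k' * diff_t tau c n' k') n k
      + diff_sb h (\<lambda>n' k'. c n' k' * (q n' k' - alpha\<^sup>2 * diff_s h x n' k')) n k
      = c n k * (diff_tb tau (diff_t tau x) n k - alpha\<^sup>2 * diff_sb h (diff_s h x) n k
          + diff_sb h q n k - 2 * (cos tau - 1) / tau\<^sup>2 * x n k)"
    unfolding time space by (simp add: algebra_simps)
  also have "\<dots> = 0"
    using assms(3) unfolding scheme_S_def q_def by simp
  finally show ?thesis .
qed

theorem mainTheorem8:
  fixes tau h alpha :: real and x :: grid
  assumes "tau > 0" and "h > 0"
    and "\<forall>n k. diff_s h x n k \<noteq> 0"
    and "scheme_S tau h alpha x (\<lambda>n k. 2 * (cos tau - 1) / tau\<^sup>2 * x n k)"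
  shows "\<forall>n k.
     diff_tb tau (\<lambda>n' k'. diff_t tau x n' k' * cos (real_of_int n' * tau)
                 - x n' k' * (cos (real_of_int (n' + 1) * tau) - cos (real_of_int n' * tau)) / tau) n k
   + diff_sb h (\<lambda>n' k'. cos (real_of_int n' * tau) *
                 (1 / (shift_t (diff_s h x) n' k' * shift_tb (diff_s h x) n' k')
                  - alpha\<^sup>2 * diff_s h x n' k')) n k = 0"
  using scheme_S_cos_conservation_law[OF assms(4)] by (simp add: diff_t_def)

end
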